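(* Let $1\le\ell\le n$, let $u,e\in\mathbb{R}^{\binom{n}{\ell}}$ and $v=u+e$. Then \[\|\mathbf{V}(v)-\mathbf{V}(u)\|_F^2 \le 3\ell^2\|e\|^2\big(2\|u\|^2+\|e\|^2\big).\] In particular, if $v_0\in\mathbb{R}^{\binom{n}{\ell}}$ is a unit vector and $v_0 = v^{(m)} + v^\perp$ with $v^{(m)}$ orthogonal to $v^\perp$, then $\|\mathbf{V}(v_0)-\mathbf{V}(v^{(m)})\|_F^2\le 9\ell^2\|v^\perp\|^2$.
   Context: Vectors in $\mathbb{R}^{\binom{n}{\ell}}$ are indexed by subsets $S\subseteq[n]$ with $|S|=\ell$. For such a vector $v$, the voting matrix $\mathbf{V}(v)$ is the symmetric $n\times n$ matrix with $\mathbf{V}_{ii}(v)=0$ and, for $i\ne j$, $\mathbf{V}_{ij}(v)=\frac12\sum_{|S|=|T|=\ell} v_Sv_T\mathbf{1}_{S\triangle T=\{i,j\}}$. $\|\cdot\|_F$ is the Frobenius norm. *)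

theory Defs
  imports "HOL-Analysis.Analysis"
begin

text \<open>Index set of R^(n choose l): the l-element subsets of [n] = {1..n}.
  A vector is a function nat set => real; only its values on lsubsets n l matter.\<close>
definition lsubsets :: "nat \<Rightarrow> nat \<Rightarrow> nat set set" where
  "lsubsets n l = {S. S \<subseteq> {1..n} \<and> card S = l}"

definition voting :: "nat \<Rightarrow> nat \<Rightarrow> (nat set \<Rightarrow> real) \<Rightarrow> nat \<Rightarrow> nat \<Rightarrow> real" where
  "voting n l v i j = (if i = j then 0 else
     (1/2) * (\<Sum>S\<in>lsubsets n l. \<Sum>T\<in>lsubsets n l.
        v S * v T * (if (S - T) \<union> (T - S) = {i, j} then 1 else 0)))"

definition vnorm2 :: "nat \<Rightarrow> nat \<Rightarrow> (nat set \<Rightarrow> real) \<Rightarrow> real" where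
  "vnorm2 n l v = (\<Sum>S\<in>lsubsets n l. (v S)^2)"

definition vinner :: "nat \<Rightarrow> nat \<Rightarrow> (nat set \<Rightarrow> real) \<Rightarrow> (nat set \<Rightarrow> real) \<Rightarrow> real" where
  "vinner n l u w = (\<Sum>S\<in>lsubsets n l. u S * w S)"

definition frob2 :: "nat \<Rightarrow> (nat \<Rightarrow> nat \<Rightarrow> real) \<Rightarrow> real" where
  "frob2 n M = (\<Sum>i\<in>{1..n}. \<Sum>j\<in>{1..n}. (M i j)^2)"

end

theory Submission
  imports Defs
begin

(* The voting matrix is the quadratic form of the symmetric bilinear form
     B(x,y)_ij = 1/2 sum_{S,T} x_S y_T [S symdiff T = {i,j}],
   so V(u+e) - V(u) = B(u,e) + B(e,u) + B(e,e), and it suffices to show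
   ||B(x,y)||_F^2 <= l^2 ||x||^2 ||y||^2.  For sets of equal size, S symdiff T = {i,j} means that T
   arises from S by exchanging i for j or j for i, and then each of S, T determines the other.
   Hence Cauchy-Schwarz bounds the square of the (i,j) exchange sum by
   (sum of x_S^2 over S containing i) * (sum of y_T^2 over T containing j), and summing over i, j
   counts every l-set exactly l times in each factor. *)

lemma finite_lsubsets: "finite (lsubsets n l)"
proof (rule finite_subset)
  show "lsubsets n l \<subseteq> Pow {1..n}" unfolding lsubsets_def by auto
qed simp

lemma lsubsets_finite_card:
  assumes "S \<in> lsubsets n l"
  shows "finite S" and "card S = l"
  using assms finite_subset unfolding lsubsets_def by auto

lemma sum_lsubsets_containing_of_bool:
  fixes f :: "nat set \<Rightarrow> real"
  shows "(\<Sum>S\<in>{S\<in>lsubsets n l. i \<in> S}. f S) = (\<Sum>S\<in>lsubsets n l. f S * of_bool (i \<in> S))"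
  by (auto simp: sum.inter_filter[OF finite_lsubsets] intro!: sum.cong)

lemma sum_lsubsets_containing:
  "(\<Sum>i\<in>{1..n}. \<Sum>S\<in>{S\<in>lsubsets n l. i \<in> S}. (x S)^2) = real l * vnorm2 n l x"
proof -
  have "(\<Sum>i\<in>{1..n}. \<Sum>S\<in>{S\<in>lsubsets n l. i \<in> S}. (x S)^2)
      = (\<Sum>i\<in>{1..n}. \<Sum>S\<in>lsubsets n l. (x S)^2 * of_bool (i \<in> S))"
    by (simp only: sum_lsubsets_containing_of_bool)
  also have "\<dots> = (\<Sum>S\<in>lsubsets n l. (x S)^2 * (\<Sum>i\<in>{1..n}. of_bool (i \<in> S)))"
    by (simp only: sum_distrib_left sum.swap[of _ "{1..n}"])
  also have "\<dots> = (\<Sum>S\<in>lsubsets n l. (x S)^2 * real l)"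
  proof (rule sum.cong)
    fix S assume S: "S \<in> lsubsets n l"
    then have "{1..n} \<inter> {i. i \<in> S} = S" unfolding lsubsets_def by auto
    then show "(x S)^2 * (\<Sum>i\<in>{1..n}. of_bool (i \<in> S)) = (x S)^2 * real l"
      using lsubsets_finite_card(2)[OF S] by simp
  qed simp
  finally show ?thesis unfolding vnorm2_def by (simp add: sum_distrib_left mult.commute)
qed

lemma vnorm2_nonneg: "0 \<le> vnorm2 n l x"
  unfolding vnorm2_def by (intro sum_nonneg) simp

lemma vnorm2_cong: "(\<And>S. S \<in> lsubsets n l \<Longrightarrow> v S = w S) \<Longrightarrow> vnorm2 n l v = vnorm2 n l w"
  unfolding vnorm2_def by (simp cong: sum.cong)

lemma vnorm2_add_orthogonal:
  assumes "vinner n l x y = 0"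
  shows "vnorm2 n l (\<lambda>S. x S + y S) = vnorm2 n l x + vnorm2 n l y"
proof -
  have "vnorm2 n l (\<lambda>S. x S + y S) = vnorm2 n l x + 2 * vinner n l x y + vnorm2 n l y"
    unfolding vnorm2_def vinner_def
    by (simp add: power2_sum sum.distrib sum_distrib_left mult.assoc)
  with assms show ?thesis by simp
qed

lemma voting_cong: "(\<And>S. S \<in> lsubsets n l \<Longrightarrow> v S = w S) \<Longrightarrow> voting n l v = voting n l w"
  unfolding voting_def by (intro ext) (simp cong: sum.cong)

lemma symdiff_eq_doubleton_iff:
  fixes S T :: "'a set"
  assumes "finite S" "finite T" "card S = card T"
  shows "(S - T) \<union> (T - S) = {i, j} \<longleftrightarrow>
           (S - T = {i} \<and> T - S = {j}) \<or> (S - T = {j} \<and> T - S = {i})"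
proof
  assume sd: "(S - T) \<union> (T - S) = {i, j}"
  have "card (S - T) = card (T - S)"
    using assms by (metis card_Diff_subset_Int finite_Int Int_commute)
  moreover have "card (S - T) + card (T - S) = card {i, j}"
    unfolding sd[symmetric] using assms by (subst card_Un_disjoint) auto
  ultimately have "card (S - T) = 1 \<and> card (T - S) = 1"
    by (cases "i = j") auto
  then obtain a b where "S - T = {a}" "T - S = {b}"
    by (meson card_1_singletonE)
  with sd show "(S - T = {i} \<and> T - S = {j}) \<or> (S - T = {j} \<and> T - S = {i})"
    by (auto simp: doubleton_eq_iff)
qed auto

definition exchange_ind :: "nat \<Rightarrow> nat \<Rightarrow> nat set \<Rightarrow> nat set \<Rightarrow> real" where
  "exchange_ind i j S T = of_bool (S - T = {i} \<and> T - S = {j})"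

lemma exchange_ind_sq: "(exchange_ind i j S T)^2 = exchange_ind i j S T"
  by (simp add: exchange_ind_def)

lemma exchange_ind_diag: "exchange_ind i i S T = 0"
  unfolding exchange_ind_def by (metis Diff_iff of_bool_eq(1) singletonI)

lemma sum_exchange_ind_right_le: "(\<Sum>T\<in>lsubsets n l. exchange_ind i j S T) \<le> of_bool (i \<in> S)"
proof -
  have "(\<Sum>T\<in>lsubsets n l. exchange_ind i j S T)
      \<le> (\<Sum>T\<in>lsubsets n l. of_bool (i \<in> S) * (if T = insert j (S - {i}) then 1 else 0))"
    by (intro sum_mono) (auto simp: exchange_ind_def)
  also have "\<dots> \<le> of_bool (i \<in> S)"
    using finite_lsubsets by (simp add: sum_distrib_left[symmetric])
  finally show ?thesis .
qed

lemma sum_exchange_ind_left_le: "(\<Sum>S\<in>lsubsets n l. exchange_ind i j S T) \<le> of_bool (j \<in> T)"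
proof -
  have "(\<Sum>S\<in>lsubsets n l. exchange_ind i j S T)
      \<le> (\<Sum>S\<in>lsubsets n l. of_bool (j \<in> T) * (if S = insert i (T - {j}) then 1 else 0))"
    by (intro sum_mono) (auto simp: exchange_ind_def)
  also have "\<dots> \<le> of_bool (j \<in> T)"
    using finite_lsubsets by (simp add: sum_distrib_left[symmetric])
  finally show ?thesis .
qed

lemma symdiff_indicator_eq_exchange_ind:
  assumes "S \<in> lsubsets n l" "T \<in> lsubsets n l"
  shows "(if (S - T) \<union> (T - S) = {i, j} then 1 else 0) = exchange_ind i j S T + exchange_ind j i S T"
proof -
  have iff: "(S - T) \<union> (T - S) = {i, j} \<longleftrightarrow>
           (S - T = {i} \<and> T - S = {j}) \<or> (S - T = {j} \<and> T - S = {i})"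
    using assms by (intro symdiff_eq_doubleton_iff) (simp_all add: lsubsets_finite_card)
  have exclusive: "\<not> ((S - T = {i} \<and> T - S = {j}) \<and> (S - T = {j} \<and> T - S = {i}))"
    by (metis Diff_iff singletonI)
  have "(if A \<or> B then 1 else 0) = of_bool A + (of_bool B :: real)" if "\<not> (A \<and> B)" for A B
    using that by auto
  from this[OF exclusive] show ?thesis
    unfolding iff exchange_ind_def .
qed

definition exchange_form ::
    "nat \<Rightarrow> nat \<Rightarrow> (nat set \<Rightarrow> real) \<Rightarrow> (nat set \<Rightarrow> real) \<Rightarrow> nat \<Rightarrow> nat \<Rightarrow> real" where
  "exchange_form n l x y i j =
     (\<Sum>S\<in>lsubsets n l. \<Sum>T\<in>lsubsets n l. x S * y T * exchange_ind i j S T)"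

lemma exchange_form_sq_le:
  "(exchange_form n l x y i j)^2
     \<le> (\<Sum>S\<in>{S\<in>lsubsets n l. i \<in> S}. (x S)^2) * (\<Sum>T\<in>{T\<in>lsubsets n l. j \<in> T}. (y T)^2)"
proof -
  let ?L = "lsubsets n l"
  let ?f = "\<lambda>(S, T). x S * exchange_ind i j S T"
  let ?g = "\<lambda>(S, T). y T * exchange_ind i j S T"
  have "exchange_form n l x y i j = (\<Sum>p\<in>?L \<times> ?L. ?f p * ?g p)"
    unfolding exchange_form_def sum.cartesian_product
    by (intro sum.cong refl) (auto simp: exchange_ind_def)
  then have CS: "(exchange_form n l x y i j)^2
      \<le> (\<Sum>p\<in>?L \<times> ?L. (?f p)^2) * (\<Sum>p\<in>?L \<times> ?L. (?g p)^2)"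
    by (simp only: Cauchy_Schwarz_ineq_sum)
  have "(\<Sum>p\<in>?L \<times> ?L. (?f p)^2) = (\<Sum>S\<in>?L. (x S)^2 * (\<Sum>T\<in>?L. exchange_ind i j S T))"
    unfolding sum.cartesian_product'
    by (simp add: power_mult_distrib exchange_ind_sq sum_distrib_left)
  also have "\<dots> \<le> (\<Sum>S\<in>?L. (x S)^2 * of_bool (i \<in> S))"
    by (intro sum_mono mult_left_mono sum_exchange_ind_right_le) simp
  finally have X: "(\<Sum>p\<in>?L \<times> ?L. (?f p)^2) \<le> (\<Sum>S\<in>{S\<in>?L. i \<in> S}. (x S)^2)"
    by (simp only: sum_lsubsets_containing_of_bool)
  have "(\<Sum>p\<in>?L \<times> ?L. (?g p)^2) = (\<Sum>S\<in>?L. \<Sum>T\<in>?L. (y T)^2 * exchange_ind i j S T)"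
    unfolding sum.cartesian_product' by (simp add: power_mult_distrib exchange_ind_sq)
  also have "\<dots> = (\<Sum>T\<in>?L. (y T)^2 * (\<Sum>S\<in>?L. exchange_ind i j S T))"
    by (subst sum.swap) (simp add: sum_distrib_left)
  also have "\<dots> \<le> (\<Sum>T\<in>?L. (y T)^2 * of_bool (j \<in> T))"
    by (intro sum_mono mult_left_mono sum_exchange_ind_left_le) simp
  finally have Y: "(\<Sum>p\<in>?L \<times> ?L. (?g p)^2) \<le> (\<Sum>T\<in>{T\<in>?L. j \<in> T}. (y T)^2)"
    by (simp only: sum_lsubsets_containing_of_bool)
  have "(\<Sum>p\<in>?L \<times> ?L. (?f p)^2) * (\<Sum>p\<in>?L \<times> ?L. (?g p)^2)
      \<le> (\<Sum>S\<in>{S\<in>?L. i \<in> S}. (x S)^2) * (\<Sum>T\<in>{T\<in>?L. j \<in> T}. (y T)^2)"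
    using X Y by (intro mult_mono sum_nonneg) auto
  with CS show ?thesis by linarith
qed

lemma frob2_exchange_form_le:
  "frob2 n (exchange_form n l x y) \<le> (real l)^2 * vnorm2 n l x * vnorm2 n l y"
proof -
  let ?a = "\<lambda>i. \<Sum>S\<in>{S\<in>lsubsets n l. i \<in> S}. (x S)^2"
  let ?b = "\<lambda>j. \<Sum>T\<in>{T\<in>lsubsets n l. j \<in> T}. (y T)^2"
  have "frob2 n (exchange_form n l x y) \<le> (\<Sum>i\<in>{1..n}. \<Sum>j\<in>{1..n}. ?a i * ?b j)"
    unfolding frob2_def by (intro sum_mono exchange_form_sq_le)
  also have "\<dots> = (\<Sum>i\<in>{1..n}. ?a i) * (\<Sum>j\<in>{1..n}. ?b j)"
    by (simp add: sum_product)
  also have "\<dots> = (real l)^2 * vnorm2 n l x * vnorm2 n l y"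
    by (simp only: sum_lsubsets_containing) (simp add: power2_eq_square)
  finally show ?thesis .
qed

definition voting_form ::
    "nat \<Rightarrow> nat \<Rightarrow> (nat set \<Rightarrow> real) \<Rightarrow> (nat set \<Rightarrow> real) \<Rightarrow> nat \<Rightarrow> nat \<Rightarrow> real" where
  "voting_form n l x y i j = (if i = j then 0 else
     (1/2) * (\<Sum>S\<in>lsubsets n l. \<Sum>T\<in>lsubsets n l.
        x S * y T * (if (S - T) \<union> (T - S) = {i, j} then 1 else 0)))"

lemma voting_eq_voting_form: "voting n l v = voting_form n l v v"
  unfolding voting_def voting_form_def ..

lemma voting_form_add_left:
  "voting_form n l (\<lambda>S. x S + z S) y i j = voting_form n l x y i j + voting_form n l z y i j"
  by (simp add: voting_form_def distrib_right sum.distrib)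

lemma voting_form_add_right:
  "voting_form n l x (\<lambda>S. y S + z S) i j = voting_form n l x y i j + voting_form n l x z i j"
  by (simp add: voting_form_def distrib_left distrib_right sum.distrib)

lemma voting_form_eq_exchange_form:
  "voting_form n l x y i j = (exchange_form n l x y i j + exchange_form n l x y j i) / 2"
proof (cases "i = j")
  case True
  then show ?thesis by (simp add: voting_form_def exchange_form_def exchange_ind_diag)
next
  case False
  have "(\<Sum>S\<in>lsubsets n l. \<Sum>T\<in>lsubsets n l.
          x S * y T * (if (S - T) \<union> (T - S) = {i, j} then 1 else 0))
      = (\<Sum>S\<in>lsubsets n l. \<Sum>T\<in>lsubsets n l.
          x S * y T * exchange_ind i j S T + x S * y T * exchange_ind j i S T)"
    by (intro sum.cong refl) (simp add: symdiff_indicator_eq_exchange_ind distrib_left)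
  with False show ?thesis
    by (simp add: voting_form_def exchange_form_def sum.distrib)
qed

lemma frob2_voting_form_le:
  "frob2 n (voting_form n l x y) \<le> (real l)^2 * vnorm2 n l x * vnorm2 n l y"
proof -
  let ?A = "exchange_form n l x y"
  have "frob2 n (voting_form n l x y) \<le> (\<Sum>i\<in>{1..n}. \<Sum>j\<in>{1..n}. ((?A i j)^2 + (?A j i)^2) / 2)"
    unfolding frob2_def
  proof (intro sum_mono)
    fix i j
    have "0 \<le> (?A i j - ?A j i)^2" by simp
    then show "(voting_form n l x y i j)^2 \<le> ((?A i j)^2 + (?A j i)^2) / 2"
      by (simp add: voting_form_eq_exchange_form power2_eq_square field_simps)
  qed
  also have "\<dots> = (frob2 n ?A + frob2 n (\<lambda>i j. ?A j i)) / 2"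
    unfolding frob2_def by (simp add: sum.distrib sum_divide_distrib add_divide_distrib)
  also have "\<dots> = frob2 n ?A"
    unfolding frob2_def by (subst sum.swap) simp
  also have "\<dots> \<le> (real l)^2 * vnorm2 n l x * vnorm2 n l y"
    by (rule frob2_exchange_form_le)
  finally show ?thesis .
qed

lemma voting_add_diff:
  "voting n l (\<lambda>S. u S + e S) i j - voting n l u i j
     = voting_form n l u e i j + voting_form n l e u i j + voting_form n l e e i j"
  by (simp add: voting_eq_voting_form voting_form_add_left voting_form_add_right)

lemma power2_sum3_le: "((a::real) + b + c)^2 \<le> 3 * (a^2 + b^2 + c^2)"
proof -
  have "0 \<le> (a - b)^2 + (b - c)^2 + (a - c)^2" by simp
  then show ?thesis by (simp add: power2_eq_square algebra_simps)
qed

lemma frob2_voting_add_diff_le: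
  "frob2 n (\<lambda>i j. voting n l (\<lambda>S. u S + e S) i j - voting n l u i j)
     \<le> 3 * (real l)^2 * vnorm2 n l e * (2 * vnorm2 n l u + vnorm2 n l e)"
proof -
  let ?p = "voting_form n l u e" and ?q = "voting_form n l e u" and ?r = "voting_form n l e e"
  have "frob2 n (\<lambda>i j. voting n l (\<lambda>S. u S + e S) i j - voting n l u i j)
      = (\<Sum>i\<in>{1..n}. \<Sum>j\<in>{1..n}. (?p i j + ?q i j + ?r i j)^2)"
    unfolding frob2_def voting_add_diff ..
  also have "\<dots> \<le> (\<Sum>i\<in>{1..n}. \<Sum>j\<in>{1..n}. 3 * ((?p i j)^2 + (?q i j)^2 + (?r i j)^2))"
    by (intro sum_mono power2_sum3_le)
  also have "\<dots> = 3 * (frob2 n ?p + frob2 n ?q + frob2 n ?r)"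
    unfolding frob2_def by (simp add: sum.distrib sum_distrib_left)
  also have "\<dots> \<le> 3 * ((real l)^2 * vnorm2 n l u * vnorm2 n l e
      + (real l)^2 * vnorm2 n l e * vnorm2 n l u + (real l)^2 * vnorm2 n l e * vnorm2 n l e)"
    by (intro mult_left_mono add_mono frob2_voting_form_le) simp
  also have "\<dots> = 3 * (real l)^2 * vnorm2 n l e * (2 * vnorm2 n l u + vnorm2 n l e)"
    by (simp add: algebra_simps)
  finally show ?thesis .
qed

lemma frob2_voting_orthogonal_le:
  assumes "vnorm2 n l v0 = 1" and "\<And>S. S \<in> lsubsets n l \<Longrightarrow> v0 S = vm S + vp S"
    and "vinner n l vm vp = 0"
  shows "frob2 n (\<lambda>i j. voting n l v0 i j - voting n l vm i j) \<le> 9 * (real l)^2 * vnorm2 n l vp"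
proof -
  have "vnorm2 n l vm + vnorm2 n l vp = 1"
    using assms vnorm2_cong[of n l v0 "\<lambda>S. vm S + vp S"] vnorm2_add_orthogonal by simp
  then have weights_le: "2 * vnorm2 n l vm + vnorm2 n l vp \<le> 3"
    using vnorm2_nonneg[of n l vm] vnorm2_nonneg[of n l vp] by linarith
  have "voting n l v0 = voting n l (\<lambda>S. vm S + vp S)"
    using assms(2) by (rule voting_cong)
  then have "frob2 n (\<lambda>i j. voting n l v0 i j - voting n l vm i j)
      \<le> 3 * (real l)^2 * vnorm2 n l vp * (2 * vnorm2 n l vm + vnorm2 n l vp)"
    using frob2_voting_add_diff_le by simp
  also have "\<dots> \<le> 3 * (real l)^2 * vnorm2 n l vp * 3"
    using weights_le by (intro mult_left_mono) (simp_all add: vnorm2_nonneg)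
  finally show ?thesis by simp
qed

theorem lemma5:
  fixes n l :: nat
  assumes "1 \<le> l" and "l \<le> n"
  shows "(\<forall>u e :: nat set \<Rightarrow> real.
           frob2 n (\<lambda>i j. voting n l (\<lambda>S. u S + e S) i j - voting n l u i j)
             \<le> 3 * (real l)^2 * vnorm2 n l e * (2 * vnorm2 n l u + vnorm2 n l e))
       \<and> (\<forall>v0 vm vp :: nat set \<Rightarrow> real.
           vnorm2 n l v0 = 1 \<longrightarrow>
           (\<forall>S\<in>lsubsets n l. v0 S = vm S + vp S) \<longrightarrow>
           vinner n l vm vp = 0 \<longrightarrow>
           frob2 n (\<lambda>i j. voting n l v0 i j - voting n l vm i j)
             \<le> 9 * (real l)^2 * vnorm2 n l vp)"
  (* The bounds hold for all n and l. *)
  by (auto intro: frob2_voting_add_diff_le frob2_voting_orthogonal_le)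


end
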